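(* Let $X\sim\mathsf{Bernoulli}(p)$ with $p\in[\frac12,1)$ and let $P_{Y|X}=\mathsf{BIBO}(\alpha,\beta)$ (i.e. $P_{Y|X}(\cdot|0)=(\bar\alpha,\alpha)$, $P_{Y|X}(\cdot|1)=(\beta,\bar\beta)$) with $\alpha,\beta\in[0,\frac12)$ and $\bar\alpha\bar p>\beta p$. Then $g^\infty(0)>0$ if and only if $\alpha\bar\alpha\bar p^2<\beta\bar\beta p^2$ and $p\in(\frac12,1)$.
   Context: For $a\in[0,1]$, $\bar a=1-a$; $\Pr(X=1)=p$. For discrete random variables, $\mathsf{P}_{\mathsf{c}}(X)=\max_xP_X(x)$, $\mathsf{P}_{\mathsf{c}}(X|Z)=\sum_z\max_xP_{XZ}(x,z)$, and $I_\infty(X;Z)=\log\frac{\mathsf{P}_{\mathsf{c}}(X|Z)}{\mathsf{P}_{\mathsf{c}}(X)}$ (Arimoto's mutual information of order $\infty$). For $\varepsilon\ge0$, $g^\infty(\varepsilon)=\sup\{I_\infty(Y;Z): P_{Z|Y},\ X - Y - Z,\ I_\infty(X;Z)\le\varepsilon\}$, the supremum over channels $P_{Z|Y}$ into finite alphabets with $X - Y - Z$ a Markov chain. (Equivalently, $g^\infty(0)>0$ means that some such $Z$ with $\mathsf{P}_{\mathsf{c}}(X|Z)=\mathsf{P}_{\mathsf{c}}(X)$ has $\mathsf{P}_{\mathsf{c}}(Y|Z)>\mathsf{P}_{\mathsf{c}}(Y)$.) *)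

theory Defs
  imports Complex_Main
begin

text \<open>Binary alphabets are {0,1} :: nat set.  A channel into a finite alphabet
  {0..<n} is a row-stochastic matrix W y z (y in {0,1}, z < n).\<close>

definition bern :: "real \<Rightarrow> nat \<Rightarrow> real" where
  "bern p x = (if x = 1 then p else 1 - p)"

definition bibo :: "real \<Rightarrow> real \<Rightarrow> nat \<Rightarrow> nat \<Rightarrow> real" where
  "bibo \<alpha> \<beta> x y = (if x = 0 then (if y = 0 then 1 - \<alpha> else \<alpha>)
                                else (if y = 0 then \<beta> else 1 - \<beta>))"

definition channel :: "nat \<Rightarrow> (nat \<Rightarrow> nat \<Rightarrow> real) \<Rightarrow> bool" where
  "channel n W \<longleftrightarrow> (\<forall>y\<in>{0,1}. (\<forall>z<n. 0 \<le> W y z) \<and> (\<Sum>z<n. W y z) = 1)"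

definition Pc :: "('a \<Rightarrow> real) \<Rightarrow> 'a set \<Rightarrow> real" where
  "Pc P A = Max (P ` A)"

definition Pc_cond :: "('a \<Rightarrow> 'b \<Rightarrow> real) \<Rightarrow> 'a set \<Rightarrow> 'b set \<Rightarrow> real" where
  "Pc_cond P A B = (\<Sum>z\<in>B. Max ((\<lambda>x. P x z) ` A))"

definition I_inf :: "('a \<Rightarrow> 'b \<Rightarrow> real) \<Rightarrow> 'a set \<Rightarrow> 'b set \<Rightarrow> real" where
  "I_inf P A B = ln (Pc_cond P A B / Pc (\<lambda>x. \<Sum>z\<in>B. P x z) A)"

definition PXZ :: "real \<Rightarrow> real \<Rightarrow> real \<Rightarrow> (nat \<Rightarrow> nat \<Rightarrow> real) \<Rightarrow> nat \<Rightarrow> nat \<Rightarrow> real" where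
  "PXZ p \<alpha> \<beta> W x z = (\<Sum>y\<in>{0,1}. bern p x * bibo \<alpha> \<beta> x y * W y z)"

definition PYZ :: "real \<Rightarrow> real \<Rightarrow> real \<Rightarrow> (nat \<Rightarrow> nat \<Rightarrow> real) \<Rightarrow> nat \<Rightarrow> nat \<Rightarrow> real" where
  "PYZ p \<alpha> \<beta> W y z = (\<Sum>x\<in>{0,1}. bern p x * bibo \<alpha> \<beta> x y * W y z)"

definition g_inf :: "real \<Rightarrow> real \<Rightarrow> real \<Rightarrow> real \<Rightarrow> real" where
  "g_inf p \<alpha> \<beta> \<epsilon> = Sup {I_inf (PYZ p \<alpha> \<beta> W) {0,1} {..<n} | n W.
       channel n W \<and> I_inf (PXZ p \<alpha> \<beta> W) {0,1} {..<n} \<le> \<epsilon>}"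

end

theory Submission
  imports Defs
begin

text \<open>Write \<open>gap0 = P\<^sub>X\<^sub>Y(0,0) - P\<^sub>X\<^sub>Y(1,0)\<close> and \<open>gap1 = P\<^sub>X\<^sub>Y(1,1) - P\<^sub>X\<^sub>Y(0,1)\<close>.
  Since \<open>p \<ge> 1/2\<close>, a channel \<open>W\<close> leaks nothing about \<open>X\<close> exactly when the MAP guess of \<open>X\<close> is 1
  for every output, i.e. \<open>gap0 W(0,z) \<le> gap1 W(1,z)\<close>. If moreover \<open>gap1 P\<^sub>Y(0) \<le> gap0 P\<^sub>Y(1)\<close>,
  which amounts to \<open>\<alpha>(1-\<alpha>)(1-p)\<^sup>2 \<ge> \<beta>(1-\<beta>)p\<^sup>2\<close>, these constraints also make 1 the MAP guess
  of \<open>Y\<close> for every output, so nothing about \<open>Y\<close> leaks either; for \<open>p = 1/2\<close> they even force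
  \<open>W(0,\<cdot>) = W(1,\<cdot>)\<close>. Otherwise the channel meeting the constraint with equality on one output
  and sending \<open>Y = 0\<close> only there changes the MAP guess of \<open>Y\<close> with \<open>Z\<close>.\<close>

lemma Pc_cond_dominating_row:
  assumes "finite A" "x \<in> A" "\<And>a z. a \<in> A \<Longrightarrow> z \<in> B \<Longrightarrow> P a z \<le> P x z"
  shows "Pc_cond P A B = (\<Sum>z\<in>B. P x z)"
  unfolding Pc_cond_def using assms by (intro sum.cong refl Max_eqI) auto

lemma row_sum_le_Pc:
  assumes "finite A" "x \<in> A"
  shows "(\<Sum>z\<in>B. P x z) \<le> Pc (\<lambda>a. \<Sum>z\<in>B. P a z) A"
  unfolding Pc_def using assms by (intro Max_ge) auto

lemma I_inf_nonpos_if_dominating_row: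
  assumes "finite A" "x \<in> A" "\<And>a z. a \<in> A \<Longrightarrow> z \<in> B \<Longrightarrow> P a z \<le> P x z"
    and "0 < (\<Sum>z\<in>B. P x z)"
  shows "I_inf P A B \<le> 0"
proof -
  have "Pc_cond P A B = (\<Sum>z\<in>B. P x z)"
    using assms(1-3) by (rule Pc_cond_dominating_row)
  moreover have "(\<Sum>z\<in>B. P x z) \<le> Pc (\<lambda>a. \<Sum>z\<in>B. P a z) A"
    using assms(1,2) by (rule row_sum_le_Pc)
  ultimately show ?thesis
    unfolding I_inf_def using assms(4) by simp
qed

lemma I_inf_binary_nonpos_imp_dominating_row:
  assumes "finite B" "(\<Sum>z\<in>B. P 0 z) \<le> (\<Sum>z\<in>B. P 1 z)" "0 < (\<Sum>z\<in>B. P 1 z)"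
    and "I_inf P {0::nat, 1} B \<le> 0"
  shows "\<forall>z\<in>B. P 0 z \<le> P 1 z"
proof -
  define M where "M z = max (P 0 z) (P 1 z)" for z
  have Pc: "Pc (\<lambda>x. \<Sum>z\<in>B. P x z) {0, 1} = (\<Sum>z\<in>B. P 1 z)"
    using assms(2) by (simp add: Pc_def)
  have pointwise: "P 1 z \<le> M z" for z by (simp add: M_def)
  then have "(\<Sum>z\<in>B. P 1 z) \<le> (\<Sum>z\<in>B. M z)" by (intro sum_mono)
  moreover have "I_inf P {0, 1} B = ln ((\<Sum>z\<in>B. M z) / (\<Sum>z\<in>B. P 1 z))"
    unfolding I_inf_def Pc_cond_def Pc M_def by simp
  ultimately have "(\<Sum>z\<in>B. M z) \<le> (\<Sum>z\<in>B. P 1 z)"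
    using assms(3,4) by simp
  with \<open>(\<Sum>z\<in>B. P 1 z) \<le> (\<Sum>z\<in>B. M z)\<close> have "(\<Sum>z\<in>B. M z - P 1 z) = 0"
    by (simp add: sum_subtractf)
  then have "\<forall>z\<in>B. M z - P 1 z = 0"
    using assms(1) pointwise by (subst (asm) sum_nonneg_eq_0_iff) auto
  then show ?thesis by (auto simp: M_def max_def split: if_splits)
qed

lemma I_inf_binary_nonpos_iff:
  assumes "finite B" "(\<Sum>z\<in>B. P 0 z) \<le> (\<Sum>z\<in>B. P 1 z)" "0 < (\<Sum>z\<in>B. P 1 z)"
  shows "I_inf P {0::nat, 1} B \<le> 0 \<longleftrightarrow> (\<forall>z\<in>B. P 0 z \<le> P 1 z)"
  using I_inf_binary_nonpos_imp_dominating_row[OF assms]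
    I_inf_nonpos_if_dominating_row[of "{0::nat, 1}" 1 B P] assms(3) by auto

lemma I_inf_le_ln_card:
  assumes "finite A" "A \<noteq> {}" "finite B" "\<And>a z. a \<in> A \<Longrightarrow> z \<in> B \<Longrightarrow> 0 \<le> P a z"
  shows "I_inf P A B \<le> ln (card A)"
proof -
  define t where "t = Pc (\<lambda>a. \<Sum>z\<in>B. P a z) A"
  have "Pc_cond P A B \<le> (\<Sum>z\<in>B. \<Sum>a\<in>A. P a z)"
    unfolding Pc_cond_def using assms
    by (intro sum_mono) (auto intro: member_le_sum)
  also have "\<dots> = (\<Sum>a\<in>A. \<Sum>z\<in>B. P a z)" by (rule sum.swap)
  also have "\<dots> \<le> (\<Sum>a\<in>A. t)"
    unfolding t_def using assms(1) by (intro sum_mono row_sum_le_Pc)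
  finally have le: "Pc_cond P A B \<le> card A * t" by simp
  have nonneg: "0 \<le> Pc_cond P A B"
    unfolding Pc_cond_def using assms
    by (intro sum_nonneg) (auto simp: Max_ge_iff)
  have card: "1 \<le> card A" using assms(1,2) by (simp add: Suc_le_eq card_gt_0_iff)
  show ?thesis
  proof (cases "Pc_cond P A B = 0")
    case True
    then show ?thesis using card by (simp add: I_inf_def)
  next
    case False
    with nonneg have pos: "0 < Pc_cond P A B" by simp
    with le have "0 < card A * t" by linarith
    then have "0 < t" by (simp add: zero_less_mult_iff)
    with pos le have "0 < Pc_cond P A B / t" "Pc_cond P A B / t \<le> card A"
      by (simp_all add: pos_divide_le_eq mult.commute)
    then show ?thesis
      unfolding I_inf_def t_def[symmetric] by (intro ln_mono) simp_all
  qed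
qed

lemma I_inf_single_output: "I_inf P A {..<1::nat} = 0"
proof -
  have "{..<1::nat} = {0}" by auto
  then have "I_inf P A {..<1} = ln (Max ((\<lambda>x. P x 0) ` A) / Max ((\<lambda>x. P x 0) ` A))"
    by (simp add: I_inf_def Pc_cond_def Pc_def)
  then show ?thesis by (cases "Max ((\<lambda>x. P x 0) ` A) = 0") simp_all
qed

lemma channelD:
  assumes "channel n W" "y \<in> {0, 1}"
  shows "(\<Sum>z<n. W y z) = 1" "\<And>z. z < n \<Longrightarrow> 0 \<le> W y z"
  using assms by (auto simp: channel_def)

lemma bibo_row_sum: "bibo \<alpha> \<beta> x 0 + bibo \<alpha> \<beta> x 1 = 1"
  by (simp add: bibo_def)

lemma sum_PXZ:
  assumes "channel n W"
  shows "(\<Sum>z<n. PXZ p \<alpha> \<beta> W x z) = bern p x"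
proof -
  have "(\<Sum>z<n. PXZ p \<alpha> \<beta> W x z) = (\<Sum>y\<in>{0,1}. bern p x * bibo \<alpha> \<beta> x y * (\<Sum>z<n. W y z))"
    unfolding PXZ_def by (simp add: sum.swap[of _ "{..<n}"] sum_distrib_left)
  also have "\<dots> = bern p x"
    using channelD(1)[OF assms] bibo_row_sum[of \<alpha> \<beta> x]
    by (simp flip: distrib_left)
  finally show ?thesis .
qed

definition PY :: "real \<Rightarrow> real \<Rightarrow> real \<Rightarrow> nat \<Rightarrow> real" where
  "PY p \<alpha> \<beta> y = (\<Sum>x\<in>{0,1}. bern p x * bibo \<alpha> \<beta> x y)"

lemma PYZ_eq: "PYZ p \<alpha> \<beta> W y z = PY p \<alpha> \<beta> y * W y z"
  unfolding PYZ_def PY_def by (simp add: distrib_right)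

lemma sum_PYZ:
  assumes "channel n W" "y \<in> {0, 1}"
  shows "(\<Sum>z<n. PYZ p \<alpha> \<beta> W y z) = PY p \<alpha> \<beta> y"
  using channelD(1)[OF assms] by (simp add: PYZ_eq flip: sum_distrib_left)


lemma channel_rows_eq_if_le:
  assumes "channel n W" "\<forall>z<n. W 0 z \<le> W 1 z"
  shows "\<forall>z<n. W 0 z = W 1 z"
proof -
  have "(\<Sum>z<n. W 1 z - W 0 z) = 0"
    using channelD(1)[OF assms(1)] by (simp add: sum_subtractf)
  then have "\<forall>z<n. W 1 z - W 0 z = 0"
    using assms(2) by (subst (asm) sum_nonneg_eq_0_iff) auto
  then show ?thesis by simp
qed

locale bibo_source =
  fixes p \<alpha> \<beta> :: real
  assumes p_ge_half: "1/2 \<le> p" and p_lt_1: "p < 1"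
    and \<alpha>_nonneg: "0 \<le> \<alpha>" and \<alpha>_lt_half: "\<alpha> < 1/2"
    and \<beta>_nonneg: "0 \<le> \<beta>" and \<beta>_lt_half: "\<beta> < 1/2"
    and output0_favours_input0: "(1 - \<alpha>) * (1 - p) > \<beta> * p"
begin

definition gap0 :: real where "gap0 = (1 - p) * (1 - \<alpha>) - p * \<beta>"
definition gap1 :: real where "gap1 = p * (1 - \<beta>) - (1 - p) * \<alpha>"

lemma gap0_pos: "0 < gap0"
  using output0_favours_input0 by (simp add: gap0_def algebra_simps)

lemma gap1_pos: "0 < gap1"
proof -
  have "(1 - p) * \<alpha> \<le> (1 - p) * (1/2)" using p_lt_1 \<alpha>_lt_half by (intro mult_left_mono) auto
  moreover have "p * (1/2) < p * (1 - \<beta>)" using p_ge_half \<beta>_lt_half by (intro mult_strict_left_mono) auto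
  moreover have "(1 - p) * (1/2) \<le> p * (1/2)" using p_ge_half by simp
  ultimately show ?thesis unfolding gap1_def by linarith
qed

lemma PY_0: "PY p \<alpha> \<beta> 0 = (1 - p) * (1 - \<alpha>) + p * \<beta>"
  by (simp add: PY_def bern_def bibo_def)

lemma PY_1: "PY p \<alpha> \<beta> 1 = (1 - p) * \<alpha> + p * (1 - \<beta>)"
  by (simp add: PY_def bern_def bibo_def)

lemma PY_pos: "y \<in> {0, 1} \<Longrightarrow> 0 < PY p \<alpha> \<beta> y"
proof -
  have "0 \<le> p * \<beta>" "0 \<le> (1 - p) * \<alpha>" using \<alpha>_nonneg \<beta>_nonneg p_lt_1 p_ge_half by simp_all
  then have "0 < PY p \<alpha> \<beta> 0" "0 < PY p \<alpha> \<beta> 1"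
    using gap0_pos gap1_pos unfolding PY_0 PY_1 gap0_def gap1_def by linarith+
  then show "y \<in> {0, 1} \<Longrightarrow> 0 < PY p \<alpha> \<beta> y" by auto
qed

lemma gap_cross_difference:
  "gap1 * PY p \<alpha> \<beta> 0 - gap0 * PY p \<alpha> \<beta> 1
     = 2 * (\<beta> * (1 - \<beta>) * p^2 - \<alpha> * (1 - \<alpha>) * (1 - p)^2)"
  unfolding gap0_def gap1_def PY_0 PY_1 by (simp add: algebra_simps power2_eq_square)

lemma PXZ_le_iff: "PXZ p \<alpha> \<beta> W 0 z \<le> PXZ p \<alpha> \<beta> W 1 z \<longleftrightarrow> gap0 * W 0 z \<le> gap1 * W 1 z"
  by (simp add: PXZ_def bern_def bibo_def gap0_def gap1_def algebra_simps)

lemma perfect_privacy_iff: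
  assumes "channel n W"
  shows "I_inf (PXZ p \<alpha> \<beta> W) {0, 1} {..<n} \<le> 0 \<longleftrightarrow> (\<forall>z<n. gap0 * W 0 z \<le> gap1 * W 1 z)"
proof -
  have "(\<Sum>z<n. PXZ p \<alpha> \<beta> W 0 z) \<le> (\<Sum>z<n. PXZ p \<alpha> \<beta> W 1 z)" "0 < (\<Sum>z<n. PXZ p \<alpha> \<beta> W 1 z)"
    using p_ge_half by (simp_all add: sum_PXZ[OF assms] bern_def)
  from I_inf_binary_nonpos_iff[OF finite_lessThan this] show ?thesis
    unfolding PXZ_le_iff by (simp add: Ball_def)
qed

lemma PYZ_nonneg: "channel n W \<Longrightarrow> y \<in> {0, 1} \<Longrightarrow> z < n \<Longrightarrow> 0 \<le> PYZ p \<alpha> \<beta> W y z"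
  using PY_pos[of y] channelD(2)[of n W y z] by (simp add: PYZ_eq)

lemma private_channel_leaks_nothing:
  assumes ch: "channel n W" and privacy: "\<forall>z<n. gap0 * W 0 z \<le> gap1 * W 1 z"
    and no_gain: "\<not> (\<alpha> * (1 - \<alpha>) * (1 - p)^2 < \<beta> * (1 - \<beta>) * p^2 \<and> 1/2 < p)"
  shows "I_inf (PYZ p \<alpha> \<beta> W) {0, 1} {..<n} \<le> 0"
proof (cases "p = 1/2")
  case True
  then have "gap0 = gap1" by (simp add: gap0_def gap1_def algebra_simps)
  with privacy gap1_pos have "\<forall>z<n. W 0 z \<le> W 1 z" by simp
  with ch have rows: "\<forall>z<n. W 1 z = W 0 z" by (simp add: channel_rows_eq_if_le)
  define x :: nat where "x = (if PY p \<alpha> \<beta> 0 \<le> PY p \<alpha> \<beta> 1 then 1 else 0)"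
  have x: "x \<in> {0, 1}" "\<And>a. a \<in> {0, 1} \<Longrightarrow> PY p \<alpha> \<beta> a \<le> PY p \<alpha> \<beta> x"
    by (auto simp: x_def)
  show ?thesis
  proof (rule I_inf_nonpos_if_dominating_row)
    fix a z assume "a \<in> {0::nat, 1}" "z \<in> {..<n}"
    moreover have "PYZ p \<alpha> \<beta> W b z = PY p \<alpha> \<beta> b * W 0 z" if "b \<in> {0, 1}" for b
      using that rows \<open>z \<in> {..<n}\<close> by (auto simp: PYZ_eq)
    ultimately show "PYZ p \<alpha> \<beta> W a z \<le> PYZ p \<alpha> \<beta> W x z"
      using x channelD(2)[OF ch, of 0 z] by (simp add: mult_right_mono)
  qed (use x ch in \<open>simp_all add: sum_PYZ PY_pos\<close>)
next
  case False
  with p_ge_half no_gain gap_cross_difference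
  have cross: "gap1 * PY p \<alpha> \<beta> 0 \<le> gap0 * PY p \<alpha> \<beta> 1" by simp
  have "PYZ p \<alpha> \<beta> W 0 z \<le> PYZ p \<alpha> \<beta> W 1 z" if "z < n" for z
  proof -
    have "gap1 * (PY p \<alpha> \<beta> 0 * W 0 z) \<le> PY p \<alpha> \<beta> 1 * (gap0 * W 0 z)"
      using mult_right_mono[OF cross channelD(2)[OF ch _ that]] by (simp add: ac_simps)
    also have "\<dots> \<le> PY p \<alpha> \<beta> 1 * (gap1 * W 1 z)"
      using privacy that PY_pos[of 1] by (intro mult_left_mono) auto
    finally show ?thesis
      using gap1_pos by (simp add: PYZ_eq ac_simps)
  qed
  then show ?thesis
    using ch PY_pos[of 1]
    by (intro I_inf_nonpos_if_dominating_row[where x = 1]) (auto simp: sum_PYZ)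
qed

text \<open>The witness sends \<open>Y = 1\<close> to \<open>Z = 0\<close> with probability \<open>gap0 / gap1\<close>, the largest value
  keeping the MAP guess of \<open>X\<close> at 1; then \<open>Y = 0\<close> is the MAP guess of \<open>Y\<close> given \<open>Z = 0\<close>,
  while \<open>Z = 1\<close> reveals \<open>Y = 1\<close>.\<close>

lemma private_leaking_channel_exists:
  assumes gain: "\<alpha> * (1 - \<alpha>) * (1 - p)^2 < \<beta> * (1 - \<beta>) * p^2" and "1/2 < p"
  shows "\<exists>n W. channel n W \<and> I_inf (PXZ p \<alpha> \<beta> W) {0, 1} {..<n} \<le> 0
                        \<and> 0 < I_inf (PYZ p \<alpha> \<beta> W) {0, 1} {..<n}"
proof -
  define r where "r = gap0 / gap1"
  define W :: "nat \<Rightarrow> nat \<Rightarrow> real" where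
    "W y z = (if y = 0 then (if z = 0 then 1 else 0) else (if z = 0 then r else 1 - r))" for y z
  have "gap1 - gap0 = 2 * p - 1" by (simp add: gap0_def gap1_def algebra_simps)
  with \<open>1/2 < p\<close> gap0_pos gap1_pos have r: "0 < r" "r < 1" by (simp_all add: r_def)
  have "gap0 * PY p \<alpha> \<beta> 1 < gap1 * PY p \<alpha> \<beta> 0" using gain gap_cross_difference by simp
  then have Y_guess: "PY p \<alpha> \<beta> 1 * r < PY p \<alpha> \<beta> 0"
    using gap1_pos by (simp add: r_def field_simps)
  have outputs: "{..<2::nat} = {0, 1}" by auto
  have ch: "channel 2 W" unfolding channel_def outputs using r by (auto simp: W_def)
  have "I_inf (PXZ p \<alpha> \<beta> W) {0, 1} {..<2} \<le> 0"
    unfolding perfect_privacy_iff[OF ch] using gap1_pos r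
    by (auto simp: W_def r_def less_2_cases_iff)
  moreover have "I_inf (PYZ p \<alpha> \<beta> W) {0, 1} {..<2}
      = ln ((PY p \<alpha> \<beta> 0 + PY p \<alpha> \<beta> 1 * (1 - r)) / max (PY p \<alpha> \<beta> 0) (PY p \<alpha> \<beta> 1))"
    using Y_guess r PY_pos[of 1]
    by (simp add: I_inf_def Pc_cond_def Pc_def outputs PYZ_eq W_def flip: distrib_left)
  moreover have "max (PY p \<alpha> \<beta> 0) (PY p \<alpha> \<beta> 1) < PY p \<alpha> \<beta> 0 + PY p \<alpha> \<beta> 1 * (1 - r)"
    unfolding max_less_iff_conj using Y_guess r PY_pos[of 1] by (simp add: algebra_simps)
  then have "0 < ln ((PY p \<alpha> \<beta> 0 + PY p \<alpha> \<beta> 1 * (1 - r)) / max (PY p \<alpha> \<beta> 0) (PY p \<alpha> \<beta> 1))"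
    using PY_pos[of 0] by simp
  ultimately show ?thesis
    using ch by (intro exI[of _ 2] exI[of _ W]) simp
qed

lemma I_inf_PYZ_le_ln2: "channel n W \<Longrightarrow> I_inf (PYZ p \<alpha> \<beta> W) {0, 1} {..<n} \<le> ln 2"
  using I_inf_le_ln_card[of "{0::nat, 1}" "{..<n}" "PYZ p \<alpha> \<beta> W"] PYZ_nonneg by simp

lemma g_inf_zero_pos_iff:
  "0 < g_inf p \<alpha> \<beta> 0 \<longleftrightarrow>
     (\<exists>n W. channel n W \<and> I_inf (PXZ p \<alpha> \<beta> W) {0, 1} {..<n} \<le> 0
                        \<and> 0 < I_inf (PYZ p \<alpha> \<beta> W) {0, 1} {..<n})"
proof -
  define S where "S = {I_inf (PYZ p \<alpha> \<beta> W) {0, 1} {..<n} | n W.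
       channel n W \<and> I_inf (PXZ p \<alpha> \<beta> W) {0, 1} {..<n} \<le> 0}"
  have "channel 1 (\<lambda>_ _. 1)" by (simp add: channel_def)
  then have "I_inf (PYZ p \<alpha> \<beta> (\<lambda>_ _. 1)) {0, 1} {..<1} \<in> S"
    unfolding S_def using I_inf_single_output[of "PXZ p \<alpha> \<beta> (\<lambda>_ _. 1)"] by fastforce
  then have "S \<noteq> {}" by blast
  moreover have "bdd_above S"
    unfolding S_def using I_inf_PYZ_le_ln2 by (intro bdd_aboveI[of _ "ln 2"]) blast
  ultimately have "0 < Sup S \<longleftrightarrow> (\<exists>x\<in>S. 0 < x)" by (rule less_cSup_iff)
  then show ?thesis
    unfolding g_inf_def S_def[symmetric] by (auto simp: S_def)
qed

end

theorem corollary2: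
  fixes p \<alpha> \<beta> :: real
  assumes "1/2 \<le> p" and "p < 1"
    and "0 \<le> \<alpha>" and "\<alpha> < 1/2" and "0 \<le> \<beta>" and "\<beta> < 1/2"
    and "(1 - \<alpha>) * (1 - p) > \<beta> * p"
  shows "g_inf p \<alpha> \<beta> 0 > 0 \<longleftrightarrow>
           (\<alpha> * (1 - \<alpha>) * (1 - p)^2 < \<beta> * (1 - \<beta>) * p^2 \<and> 1/2 < p)"
proof -
  interpret bibo_source p \<alpha> \<beta> using assms by unfold_locales
  show ?thesis
  proof
    assume "g_inf p \<alpha> \<beta> 0 > 0"
    then obtain n W where ch: "channel n W" and "I_inf (PXZ p \<alpha> \<beta> W) {0, 1} {..<n} \<le> 0"
      and leak: "0 < I_inf (PYZ p \<alpha> \<beta> W) {0, 1} {..<n}"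
      unfolding g_inf_zero_pos_iff by blast
    then have "\<forall>z<n. gap0 * W 0 z \<le> gap1 * W 1 z" using perfect_privacy_iff[OF ch] by blast
    with ch leak private_channel_leaks_nothing
    show "\<alpha> * (1 - \<alpha>) * (1 - p)^2 < \<beta> * (1 - \<beta>) * p^2 \<and> 1/2 < p" by force
  next
    assume "\<alpha> * (1 - \<alpha>) * (1 - p)^2 < \<beta> * (1 - \<beta>) * p^2 \<and> 1/2 < p"
    then show "g_inf p \<alpha> \<beta> 0 > 0"
      unfolding g_inf_zero_pos_iff by (intro private_leaking_channel_exists) auto
  qed
qed

end
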